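(* Let $\alpha\ge0$ and $2+2\alpha<p<2(2+\alpha)$, and define $\psi_{\alpha,p}(t)=t^{\frac{2+\alpha}{p}-1}(1-t)^{-\frac{2+\alpha}{p}}$ for $0<t<1$. Then the following statements are equivalent: (a) $B\left(\frac{2+\alpha}{p},1-\frac{2+\alpha}{p}\right)H_{\alpha,p}(0)-\int_0^1\psi_{\alpha,p}(t)K_{\alpha,p}(0,t)\,dt\le 0$; (b) $B\left(\frac{2+\alpha}{p},1-\frac{2+\alpha}{p}\right)\left[\frac12 B\left(\frac{p-2\alpha-2}{2},\alpha+1\right)-\frac{1}{2(\alpha+1)}\right]-\frac12\int_0^1\psi_{\alpha,p}(t)B_{t^4}\left(\frac{p-2\alpha-2}{2},\alpha+1\right)dt\le 0$; (c) $\int_0^1 I_t\left(\frac{2+\alpha}{p},1-\frac{2+\alpha}{p}\right)t^{2p-4\alpha-5}(1-t^4)^\alpha\,dt-\frac{1}{4(\alpha+1)}\le0$.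
   Context: $\binom{\alpha}{k}$ denotes the generalized binomial coefficient $\frac{\alpha(\alpha-1)\cdots(\alpha-k+1)}{k!}$, $\binom{\alpha}{0}=1$. For $\alpha\ge0$ and $2+2\alpha<p<2(2+\alpha)$ define $H_{\alpha,p}(s)=\sum_{k=0}^\infty\binom{\alpha}{k}(-1)^k\frac{1}{p-2\alpha-2+2k}-\frac{1}{2(\alpha+1)}(1-s^4)^{\alpha+1}$ for $0\le s\le1$, and $K_{\alpha,p}(s,t)=\sum_{k=0}^\infty\binom{\alpha}{k}(-1)^k\frac{1}{p-2\alpha-2+2k}\max\{s^2,t^2\}^{p-2\alpha-2+2k}$ for $0\le s\le1$, $0<t<1$. $B(x,y)=\int_0^1 s^{x-1}(1-s)^{y-1}ds$ is the Beta function, $B_t(x,y)=\int_0^t s^{x-1}(1-s)^{y-1}ds$ the incomplete Beta function, and $I_t(x,y)=B_t(x,y)/B(x,y)$. *)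

theory Defs
  imports "HOL-Analysis.Analysis"
begin

definition H_ap :: "real \<Rightarrow> real \<Rightarrow> real \<Rightarrow> real" where
  "H_ap \<alpha> p s =
     (\<Sum>k. (\<alpha> gchoose k) * (-1) ^ k * (1 / (p - 2*\<alpha> - 2 + 2 * real k)))
     - 1 / (2 * (\<alpha> + 1)) * (1 - s ^ 4) powr (\<alpha> + 1)"

definition K_ap :: "real \<Rightarrow> real \<Rightarrow> real \<Rightarrow> real \<Rightarrow> real" where
  "K_ap \<alpha> p s t =
     (\<Sum>k. (\<alpha> gchoose k) * (-1) ^ k * (1 / (p - 2*\<alpha> - 2 + 2 * real k))
            * (max (s\<^sup>2) (t\<^sup>2)) powr (p - 2*\<alpha> - 2 + 2 * real k))"

definition inc_Beta :: "real \<Rightarrow> real \<Rightarrow> real \<Rightarrow> real" where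
  "inc_Beta t x y = integral {0..t} (\<lambda>s. s powr (x - 1) * (1 - s) powr (y - 1))"

definition reg_inc_Beta :: "real \<Rightarrow> real \<Rightarrow> real \<Rightarrow> real" where
  "reg_inc_Beta t x y = inc_Beta t x y / Beta x y"

definition psi_ap :: "real \<Rightarrow> real \<Rightarrow> real \<Rightarrow> real" where
  "psi_ap \<alpha> p t = t powr ((2 + \<alpha>) / p - 1) * (1 - t) powr (- ((2 + \<alpha>) / p))"

end

theory Submission
  imports Defs
begin

(*
  With g = (p - 2 alpha - 2)/2, expanding (1 - s)^alpha binomially identifies the series in H and K
  with Beta functions: H(0) = B(g, alpha + 1)/2 - 1/(2(alpha + 1)) and K(0, t) = B_{t^4}(g, alpha + 1)/2,
  so (a) and (b) have literally the same left-hand side. The termwise integration behind this is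
  checked by differentiating: v^g times the coefficient series has derivative v^(g-1) (1 - v)^alpha.
  Since psi is the integrand of B_t((2+alpha)/p, 1 - (2+alpha)/p) = B I_t, integrating by parts turns
  the integral in (b) into B B(g, alpha + 1) - 4 B times the integral in (c); hence the left-hand
  side of (b) is 2 B > 0 times that of (c).
*)

lemma bounded_of_nat_mult_abs_gbinomial:
  fixes a :: real
  assumes "a \<ge> 0"
  obtains M where "\<And>k. real k * \<bar>a gchoose k\<bar> \<le> M"
proof -
  define N where "N = nat \<lceil>a\<rceil>"
  define M where "M = (\<Sum>k\<le>N. real k * \<bar>a gchoose k\<bar>)"
  have initial: "real k * \<bar>a gchoose k\<bar> \<le> M" if "k \<le> N" for k
    unfolding M_def using that by (intro member_le_sum) auto
  have decreasing: "real (Suc k) * \<bar>a gchoose Suc k\<bar> \<le> real k * \<bar>a gchoose k\<bar>" if "N \<le> k" for k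
  proof -
    have "real (Suc k) * (a gchoose Suc k) = (a - real k) * (a gchoose k)"
      using gbinomial_mult_1[of a k] by (simp add: algebra_simps)
    moreover have "\<bar>a - real k\<bar> \<le> real k"
      using assms that unfolding N_def by linarith
    ultimately show ?thesis
      by (metis abs_ge_zero abs_mult abs_of_nat mult_right_mono)
  qed
  have tail: "real (N + j) * \<bar>a gchoose (N + j)\<bar> \<le> M" for j
  proof (induction j)
    case 0
    then show ?case using initial by simp
  next
    case (Suc j)
    then show ?case using decreasing[of "N + j"] by simp
  qed
  have "real k * \<bar>a gchoose k\<bar> \<le> M" for k
    using initial tail[of "k - N"] by (cases "k \<le> N") simp_all
  then show thesis by (rule that)
qed

lemma summable_abs_gbinomial_div:
  fixes a g :: real
  assumes "a \<ge> 0" "g > 0"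
  shows "summable (\<lambda>k. \<bar>a gchoose k\<bar> / (real k + g))"
proof -
  obtain M where M: "\<And>k. real k * \<bar>a gchoose k\<bar> \<le> M"
    using bounded_of_nat_mult_abs_gbinomial[OF assms(1)] by blast
  have "summable (\<lambda>k. M * inverse (real k ^ 2))"
    by (intro summable_mult inverse_power_summable) auto
  then show ?thesis
  proof (rule summable_comparison_test'[where N = 1])
    fix k :: nat
    assume k: "1 \<le> k"
    have "norm (\<bar>a gchoose k\<bar> / (real k + g)) \<le> \<bar>a gchoose k\<bar> / real k"
      using k assms by (simp add: divide_left_mono)
    also have "\<dots> = real k * \<bar>a gchoose k\<bar> / real k ^ 2"
      using k by (simp add: power2_eq_square)
    also have "\<dots> \<le> M * inverse (real k ^ 2)"
      using M[of k] by (simp add: divide_right_mono field_simps)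
    finally show "norm (\<bar>a gchoose k\<bar> / (real k + g)) \<le> M * inverse (real k ^ 2)" .
  qed
qed

lemma Beta_real_pos: "x > 0 \<Longrightarrow> y > 0 \<Longrightarrow> Beta x y > (0 :: real)"
  by (simp add: Beta_def Gamma_real_pos)

context
  fixes x y :: real
  assumes x: "x > 0" and y: "y > 0"
begin

lemma integrable_Beta_integrand: "(\<lambda>s. s powr (x - 1) * (1 - s) powr (y - 1)) integrable_on {0..1}"
  using has_integral_Beta_real[OF x y] by blast

lemma inc_Beta_one: "inc_Beta 1 x y = Beta x y"
  unfolding inc_Beta_def using has_integral_Beta_real[OF x y] by (rule integral_unique)

lemma continuous_on_inc_Beta: "continuous_on {0..1} (\<lambda>v. inc_Beta v x y)"
  unfolding inc_Beta_def by (rule indefinite_integral_continuous_1[OF integrable_Beta_integrand])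

lemma inc_Beta_has_real_derivative:
  assumes "0 < v" "v < 1"
  shows "((\<lambda>v. inc_Beta v x y) has_real_derivative v powr (x - 1) * (1 - v) powr (y - 1)) (at v)"
proof -
  have "continuous (at v within {0..1}) (\<lambda>s. s powr (x - 1) * (1 - s) powr (y - 1))"
    using assms by (intro continuous_intros) auto
  then have "((\<lambda>v. inc_Beta v x y) has_vector_derivative v powr (x - 1) * (1 - v) powr (y - 1))
      (at v within {0..1})"
    unfolding inc_Beta_def
    using integral_has_vector_derivative_continuous_at[OF integrable_Beta_integrand, of v "{}"] assms
    by simp
  moreover have "at v within {0..1} = at v"
    using assms by (intro at_within_interior) auto
  ultimately show ?thesis
    by (simp add: has_real_derivative_iff_has_vector_derivative)
qed

end

definition inc_Beta_coeff :: "real \<Rightarrow> real \<Rightarrow> nat \<Rightarrow> real" where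
  "inc_Beta_coeff a g k = (a gchoose k) * (-1) ^ k / (real k + g)"

context
  fixes a g :: real
  assumes a: "a \<ge> 0" and g: "g > 0"
begin

lemma summable_abs_inc_Beta_coeff: "summable (\<lambda>k. \<bar>inc_Beta_coeff a g k\<bar>)"
  using summable_abs_gbinomial_div[OF a g] g by (simp add: inc_Beta_coeff_def abs_mult)

lemma norm_inc_Beta_coeff_power_le:
  "\<bar>v\<bar> \<le> 1 \<Longrightarrow> norm (inc_Beta_coeff a g k * v ^ k) \<le> \<bar>inc_Beta_coeff a g k\<bar>"
  by (simp add: abs_mult power_abs mult_left_le power_le_one)

lemma summable_inc_Beta_coeff_power: "\<bar>v\<bar> \<le> 1 \<Longrightarrow> summable (\<lambda>k. inc_Beta_coeff a g k * v ^ k)"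
  by (rule summable_comparison_test[OF _ summable_abs_inc_Beta_coeff])
     (use norm_inc_Beta_coeff_power_le in auto)

lemma continuous_on_inc_Beta_series:
  "continuous_on {-1..1} (\<lambda>v. \<Sum>k. inc_Beta_coeff a g k * v ^ k)"
proof -
  have "uniform_limit {-1..1} (\<lambda>n v. \<Sum>k<n. inc_Beta_coeff a g k * v ^ k)
      (\<lambda>v. \<Sum>k. inc_Beta_coeff a g k * v ^ k) sequentially"
    by (rule Weierstrass_m_test[OF _ summable_abs_inc_Beta_coeff], rule norm_inc_Beta_coeff_power_le)
       auto
  then show ?thesis
    by (rule uniform_limit_theorem[rotated]) (auto intro!: always_eventually continuous_intros)
qed

lemma inc_Beta_series_ode:
  assumes v: "\<bar>v\<bar> < 1"
  shows "g * (\<Sum>k. inc_Beta_coeff a g k * v ^ k) + v * (\<Sum>k. diffs (inc_Beta_coeff a g) k * v ^ k)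
    = (1 - v) powr a"
proof -
  let ?c = "inc_Beta_coeff a g"
  have P: "(\<lambda>k. ?c k * v ^ k) sums (\<Sum>k. ?c k * v ^ k)"
    using summable_inc_Beta_coeff_power v by (intro summable_sums) auto
  have "summable (\<lambda>k. diffs ?c k * v ^ k)"
    by (rule termdiff_converges[where K = 1]) (use summable_inc_Beta_coeff_power v in auto)
  then have "(\<lambda>k. v * (diffs ?c k * v ^ k)) sums (v * (\<Sum>k. diffs ?c k * v ^ k))"
    by (intro sums_mult summable_sums)
  moreover have "v * (diffs ?c k * v ^ k) = real (Suc k) * ?c (Suc k) * v ^ Suc k" for k
    by (simp add: diffs_def)
  ultimately have "(\<lambda>k. real (Suc k) * ?c (Suc k) * v ^ Suc k) sums (v * (\<Sum>k. diffs ?c k * v ^ k))"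
    by simp
  then have "(\<lambda>k. real k * ?c k * v ^ k) sums (v * (\<Sum>k. diffs ?c k * v ^ k))"
    using sums_Suc_iff[where f = "\<lambda>k. real k * ?c k * v ^ k"] by simp
  with P have "(\<lambda>k. g * (?c k * v ^ k) + real k * ?c k * v ^ k)
      sums (g * (\<Sum>k. ?c k * v ^ k) + v * (\<Sum>k. diffs ?c k * v ^ k))"
    by (intro sums_add sums_mult)
  moreover have "g * (?c k * v ^ k) + real k * ?c k * v ^ k = (a gchoose k) * (- v) ^ k" for k
  proof -
    have "g * (?c k * v ^ k) + real k * ?c k * v ^ k = ((real k + g) * ?c k) * v ^ k"
      by (simp add: algebra_simps)
    also have "(real k + g) * ?c k = (a gchoose k) * (-1) ^ k"
      using g by (simp add: inc_Beta_coeff_def add_pos_nonneg)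
    finally show ?thesis by (simp add: power_minus[of v])
  qed
  ultimately have "(\<lambda>k. (a gchoose k) * (- v) ^ k)
      sums (g * (\<Sum>k. ?c k * v ^ k) + v * (\<Sum>k. diffs ?c k * v ^ k))"
    by simp
  moreover have "(\<lambda>k. (a gchoose k) * (- v) ^ k) sums (1 - v) powr a"
    using gen_binomial_real[of "- v" a] v by simp
  ultimately show ?thesis by (rule sums_unique2)
qed

lemma has_integral_inc_Beta_series:
  assumes "0 \<le> x" "x \<le> 1"
  shows "((\<lambda>s. s powr (g - 1) * (1 - s) powr a)
    has_integral x powr g * (\<Sum>k. inc_Beta_coeff a g k * x ^ k)) {0..x}"
proof -
  define P where "P v = (\<Sum>k. inc_Beta_coeff a g k * v ^ k)" for v
  define P' where "P' v = (\<Sum>k. diffs (inc_Beta_coeff a g) k * v ^ k)" for v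
  have "((\<lambda>v. v powr g * P v) has_vector_derivative v powr (g - 1) * (1 - v) powr a) (at v)"
    if v: "0 < v" "v < 1" for v
  proof -
    have "(P has_real_derivative P' v) (at v)"
      unfolding P_def P'_def
      by (rule termdiffs_strong[where K = 1]) (use summable_inc_Beta_coeff_power[of 1] v in auto)
    then have "((\<lambda>v. v powr g * P v) has_real_derivative
        v powr g * P' v + g * v powr (g - 1) * P v) (at v)"
      using v by (intro DERIV_mult' has_real_derivative_powr) auto
    moreover have "v powr g * P' v + g * v powr (g - 1) * P v = v powr (g - 1) * (g * P v + v * P' v)"
      using v by (simp add: powr_diff field_simps)
    ultimately show ?thesis
      using inc_Beta_series_ode[of v] v
      by (simp add: P_def P'_def has_real_derivative_iff_has_vector_derivative)
  qed
  moreover have "continuous_on {0..x} (\<lambda>v. v powr g * P v)"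
  proof (intro continuous_on_mult)
    show "continuous_on {0..x} (\<lambda>v. v powr g)"
      using g by (intro continuous_on_powr') auto
    show "continuous_on {0..x} P"
      unfolding P_def by (rule continuous_on_subset[OF continuous_on_inc_Beta_series]) (use assms in auto)
  qed
  ultimately have "((\<lambda>s. s powr (g - 1) * (1 - s) powr a) has_integral x powr g * P x - 0 powr g * P 0) {0..x}"
    using assms by (intro fundamental_theorem_of_calculus_interior) auto
  then show ?thesis by (simp add: P_def)
qed

lemma inc_Beta_eq_series:
  "0 \<le> x \<Longrightarrow> x \<le> 1 \<Longrightarrow> inc_Beta x g (a + 1) = x powr g * (\<Sum>k. inc_Beta_coeff a g k * x ^ k)"
  unfolding inc_Beta_def using has_integral_inc_Beta_series by (simp add: integral_unique)

lemma Beta_eq_series: "Beta g (a + 1) = (\<Sum>k. inc_Beta_coeff a g k)"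
  using inc_Beta_eq_series[of 1] inc_Beta_one[of g "a + 1"] a g by simp

end

lemma integral_by_parts_indefinite_integral:
  fixes f G G' :: "real \<Rightarrow> real"
  assumes "a \<le> b"
    and f: "f integrable_on {a..b}" "\<And>x. x \<in> {a<..<b} \<Longrightarrow> isCont f x"
    and G: "continuous_on {a..b} G" "\<And>x. x \<in> {a<..<b} \<Longrightarrow> (G has_real_derivative G' x) (at x)"
    and G'_nonneg: "\<And>x. x \<in> {a..b} \<Longrightarrow> 0 \<le> G' x"
  shows "integral {a..b} (\<lambda>x. f x * G x)
    = integral {a..b} f * G b - integral {a..b} (\<lambda>x. integral {a..x} f * G' x)"
proof -
  define F where "F x = integral {a..x} f" for x
  have F_cont: "continuous_on {a..b} F"
    unfolding F_def by (rule indefinite_integral_continuous_1[OF f(1)])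
  have F_deriv: "(F has_vector_derivative f x) (at x)" if x: "x \<in> {a<..<b}" for x
  proof -
    have "(F has_vector_derivative f x) (at x within {a..b})"
      unfolding F_def using integral_has_vector_derivative_continuous_at[OF f(1), of x "{}"] x f(2)
      by (simp add: continuous_at_imp_continuous_within)
    moreover have "at x within {a..b} = at x"
      using x by (intro at_within_interior) auto
    ultimately show ?thesis by simp
  qed
  have G_deriv: "(G has_vector_derivative G' x) (at x)" if "x \<in> {a<..<b}" for x
    using G(2)[OF that] by (simp add: has_real_derivative_iff_has_vector_derivative)
  have "(G' has_integral G b - G a) {a..b}"
    using \<open>a \<le> b\<close> G(1) G_deriv by (intro fundamental_theorem_of_calculus_interior) auto
  then have "G' absolutely_integrable_on {a..b}"
    using G'_nonneg by (intro nonnegative_absolutely_integrable_1) auto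
  then have "(\<lambda>x. F x * G' x) absolutely_integrable_on {a..b}"
    using F_cont
    by (intro absolutely_integrable_bounded_measurable_product_real
        continuous_imp_measurable_on_sets_lebesgue compact_imp_bounded compact_continuous_image) auto
  then have "((\<lambda>x. F x * G' x) has_integral integral {a..b} (\<lambda>x. F x * G' x)) {a..b}"
    using set_lebesgue_integral_eq_integral(1) by blast
  then have "((\<lambda>x. f x * G x)
      has_integral F b * G b - F a * G a - integral {a..b} (\<lambda>x. F x * G' x)) {a..b}"
    by (intro integration_by_parts_interior[OF bounded_bilinear_mult \<open>a \<le> b\<close> F_cont G(1) F_deriv G_deriv])
       simp_all
  then show ?thesis by (simp add: F_def integral_unique)
qed

lemma realpow_powr: "0 < t \<Longrightarrow> (t ^ n) powr x = t powr (real n * x)"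
  by (simp add: powr_realpow[symmetric] powr_powr)

lemma H_ap_coeff:
  "(\<alpha> gchoose k) * (-1) ^ k * (1 / (p - 2*\<alpha> - 2 + 2 * real k))
    = inc_Beta_coeff \<alpha> ((p - 2*\<alpha> - 2) / 2) k / 2"
proof -
  have "real k + (p - 2*\<alpha> - 2) / 2 = (p - 2*\<alpha> - 2 + 2 * real k) / 2" by simp
  then show ?thesis by (simp add: inc_Beta_coeff_def)
qed

lemma H_ap_zero:
  assumes "\<alpha> \<ge> 0" "2 + 2*\<alpha> < p"
  shows "H_ap \<alpha> p 0 = Beta ((p - 2*\<alpha> - 2) / 2) (\<alpha> + 1) / 2 - 1 / (2 * (\<alpha> + 1))"
proof -
  define g where "g = (p - 2*\<alpha> - 2) / 2"
  have g: "g > 0" using assms(2) by (simp add: g_def)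
  have "summable (inc_Beta_coeff \<alpha> g)"
    using summable_rabs_cancel[OF summable_abs_inc_Beta_coeff[OF assms(1) g]] .
  from suminf_divide[OF this, of 2] have "(\<Sum>k. inc_Beta_coeff \<alpha> g k / 2) = Beta g (\<alpha> + 1) / 2"
    using Beta_eq_series[OF assms(1) g] by simp
  then show ?thesis
    unfolding H_ap_def H_ap_coeff by (simp add: g_def)
qed

lemma K_ap_zero:
  assumes "\<alpha> \<ge> 0" "2 + 2*\<alpha> < p" "0 < t" "t \<le> 1"
  shows "K_ap \<alpha> p 0 t = inc_Beta (t ^ 4) ((p - 2*\<alpha> - 2) / 2) (\<alpha> + 1) / 2"
proof -
  define g where "g = (p - 2*\<alpha> - 2) / 2"
  have g: "g > 0" using assms(2) by (simp add: g_def)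
  have "max (0\<^sup>2) (t\<^sup>2) powr (p - 2*\<alpha> - 2 + 2 * real k) = (t ^ 4) powr g * (t ^ 4) ^ k" for k
  proof -
    have "max (0\<^sup>2) (t\<^sup>2) powr (p - 2*\<alpha> - 2 + 2 * real k) = t powr (2 * (p - 2*\<alpha> - 2 + 2 * real k))"
      using assms(3) by (simp add: realpow_powr)
    also have "2 * (p - 2*\<alpha> - 2 + 2 * real k) = 4 * g + 4 * real k"
      by (simp add: g_def)
    also have "t powr (4 * g + 4 * real k) = (t ^ 4) powr g * t powr real (4 * k)"
      using assms(3) by (simp add: powr_add realpow_powr)
    also have "t powr real (4 * k) = (t ^ 4) ^ k"
      by (simp only: powr_realpow[OF assms(3)] power_mult)
    finally show ?thesis .
  qed
  then have "K_ap \<alpha> p 0 t = (\<Sum>k. (t ^ 4) powr g / 2 * (inc_Beta_coeff \<alpha> g k * (t ^ 4) ^ k))"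
    unfolding K_ap_def H_ap_coeff g_def by (simp add: mult_ac)
  also have "\<dots> = (t ^ 4) powr g / 2 * (\<Sum>k. inc_Beta_coeff \<alpha> g k * (t ^ 4) ^ k)"
    using assms by (intro suminf_mult summable_inc_Beta_coeff_power g) (auto simp: power_le_one)
  also have "\<dots> = inc_Beta (t ^ 4) g (\<alpha> + 1) / 2"
    using assms by (simp add: inc_Beta_eq_series[OF _ g] power_le_one)
  finally show ?thesis by (simp add: g_def)
qed

lemma integral_psi_ap_mult_inc_Beta:
  assumes "\<alpha> \<ge> 0" "2 + 2*\<alpha> < p" "p < 2 * (2 + \<alpha>)"
  defines "c \<equiv> (2 + \<alpha>) / p" and "g \<equiv> (p - 2*\<alpha> - 2) / 2"
  shows "integral {0<..<1} (\<lambda>t. psi_ap \<alpha> p t * inc_Beta (t ^ 4) g (\<alpha> + 1))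
    = Beta c (1 - c) * Beta g (\<alpha> + 1) - 4 * Beta c (1 - c)
      * integral {0<..<1} (\<lambda>t. reg_inc_Beta t c (1 - c) * t powr (2*p - 4*\<alpha> - 5) * (1 - t ^ 4) powr \<alpha>)"
proof -
  have c: "0 < c" "0 < 1 - c" and g: "0 < g" and \<alpha>: "0 < \<alpha> + 1"
    using assms by (auto simp: c_def g_def)
  have psi: "psi_ap \<alpha> p = (\<lambda>s. s powr (c - 1) * (1 - s) powr ((1 - c) - 1))"
    by (simp add: psi_ap_def c_def fun_eq_iff)
  define G' where "G' t = 4 * (t powr (2*p - 4*\<alpha> - 5) * (1 - t ^ 4) powr \<alpha>)" for t
  have G_deriv: "((\<lambda>t. inc_Beta (t ^ 4) g (\<alpha> + 1)) has_real_derivative G' t) (at t)"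
    if t: "0 < t" "t < 1" for t
  proof -
    have "0 < t ^ 4" "t ^ 4 < 1" using t by (auto simp: power_less_one_iff)
    from DERIV_chain2[OF inc_Beta_has_real_derivative[OF g \<alpha> this] DERIV_pow[of 4 t]]
    have chain: "((\<lambda>t. inc_Beta (t ^ 4) g (\<alpha> + 1)) has_real_derivative
        (t ^ 4) powr (g - 1) * (1 - t ^ 4) powr \<alpha> * (4 * t ^ 3)) (at t)"
      by simp
    have exponent: "t ^ 3 * (t ^ 4) powr (g - 1) = t powr (2*p - 4*\<alpha> - 5)"
    proof -
      have "t ^ 3 * (t ^ 4) powr (g - 1) = t powr 3 * t powr (4 * (g - 1))"
        using t by (simp add: realpow_powr powr_realpow)
      also have "\<dots> = t powr (3 + 4 * (g - 1))"
        by (simp only: powr_add)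
      also have "3 + 4 * (g - 1) = 2*p - 4*\<alpha> - 5"
        by (simp add: g_def field_simps)
      finally show ?thesis .
    qed
    then have "(t ^ 4) powr (g - 1) * (1 - t ^ 4) powr \<alpha> * (4 * t ^ 3) = G' t"
      unfolding G'_def by (simp add: mult_ac flip: exponent)
    with chain show ?thesis by simp
  qed
  have G_cont: "continuous_on {0..1} (\<lambda>t. inc_Beta (t ^ 4) g (\<alpha> + 1))"
    by (rule continuous_on_compose2[OF continuous_on_inc_Beta[OF g \<alpha>]])
       (auto intro!: continuous_intros simp: power_le_one)
  have "integral {0..1} (\<lambda>t. psi_ap \<alpha> p t * inc_Beta (t ^ 4) g (\<alpha> + 1))
      = integral {0..1} (psi_ap \<alpha> p) * inc_Beta (1 ^ 4) g (\<alpha> + 1)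
        - integral {0..1} (\<lambda>t. integral {0..t} (psi_ap \<alpha> p) * G' t)"
  proof (rule integral_by_parts_indefinite_integral[OF _ _ _ G_cont G_deriv])
    show "psi_ap \<alpha> p integrable_on {0..1}"
      unfolding psi by (rule integrable_Beta_integrand[OF c])
    show "isCont (psi_ap \<alpha> p) t" if "t \<in> {0<..<1}" for t
      using that unfolding psi by (intro continuous_intros) auto
    show "0 \<le> G' t" for t
      by (simp add: G'_def)
  qed auto
  moreover have "integral {0..t} (psi_ap \<alpha> p) = inc_Beta t c (1 - c)" for t
    by (simp add: inc_Beta_def psi)
  moreover have "Beta c (1 - c) \<noteq> 0"
    using Beta_real_pos[OF c] by simp
  ultimately show ?thesis
    using inc_Beta_one[OF c] inc_Beta_one[OF g \<alpha>] unfolding integral_open_interval_real[symmetric]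
    by (simp add: G'_def reg_inc_Beta_def mult_ac)
qed

theorem lemma3p2:
  fixes \<alpha> p :: real
  assumes "\<alpha> \<ge> 0" and "2 + 2*\<alpha> < p" and "p < 2 * (2 + \<alpha>)"
  shows "(Beta ((2 + \<alpha>) / p) (1 - (2 + \<alpha>) / p) * H_ap \<alpha> p 0
            - integral {0<..<1} (\<lambda>t. psi_ap \<alpha> p t * K_ap \<alpha> p 0 t) \<le> 0
          \<longleftrightarrow>
          Beta ((2 + \<alpha>) / p) (1 - (2 + \<alpha>) / p)
              * (1/2 * Beta ((p - 2*\<alpha> - 2) / 2) (\<alpha> + 1) - 1 / (2 * (\<alpha> + 1)))
            - 1/2 * integral {0<..<1}
                (\<lambda>t. psi_ap \<alpha> p t * inc_Beta (t ^ 4) ((p - 2*\<alpha> - 2) / 2) (\<alpha> + 1)) \<le> 0)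
       \<and> (Beta ((2 + \<alpha>) / p) (1 - (2 + \<alpha>) / p) * H_ap \<alpha> p 0
            - integral {0<..<1} (\<lambda>t. psi_ap \<alpha> p t * K_ap \<alpha> p 0 t) \<le> 0
          \<longleftrightarrow>
          integral {0<..<1}
              (\<lambda>t. reg_inc_Beta t ((2 + \<alpha>) / p) (1 - (2 + \<alpha>) / p)
                     * t powr (2*p - 4*\<alpha> - 5) * (1 - t ^ 4) powr \<alpha>)
            - 1 / (4 * (\<alpha> + 1)) \<le> 0)"
proof -
  define c where "c = (2 + \<alpha>) / p"
  define g where "g = (p - 2*\<alpha> - 2) / 2"
  define B where "B = Beta c (1 - c)"
  define R where "R = integral {0<..<1}
    (\<lambda>t. reg_inc_Beta t c (1 - c) * t powr (2*p - 4*\<alpha> - 5) * (1 - t ^ 4) powr \<alpha>)"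
  have "B > 0"
    using assms unfolding B_def c_def by (intro Beta_real_pos) auto
  have by_parts: "integral {0<..<1} (\<lambda>t. psi_ap \<alpha> p t * inc_Beta (t ^ 4) g (\<alpha> + 1))
      = B * Beta g (\<alpha> + 1) - 4 * B * R"
    using integral_psi_ap_mult_inc_Beta[OF assms] unfolding B_def R_def c_def g_def .
  have "integral {0<..<1} (\<lambda>t. psi_ap \<alpha> p t * K_ap \<alpha> p 0 t) = 1/2 * (B * Beta g (\<alpha> + 1) - 4 * B * R)"
    unfolding by_parts[symmetric]
    by (subst integral_mult_right[symmetric], rule integral_cong)
       (use assms in \<open>simp add: K_ap_zero g_def\<close>)
  then have a_eq: "B * H_ap \<alpha> p 0 - integral {0<..<1} (\<lambda>t. psi_ap \<alpha> p t * K_ap \<alpha> p 0 t)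
      = 2 * B * (R - 1 / (4 * (\<alpha> + 1)))"
    unfolding H_ap_zero[OF assms(1,2)] g_def[symmetric] using assms(1) by (simp add: divide_simps) algebra
  have b_eq: "B * (1/2 * Beta g (\<alpha> + 1) - 1 / (2 * (\<alpha> + 1)))
        - 1/2 * integral {0<..<1} (\<lambda>t. psi_ap \<alpha> p t * inc_Beta (t ^ 4) g (\<alpha> + 1))
      = 2 * B * (R - 1 / (4 * (\<alpha> + 1)))"
    unfolding by_parts using assms(1) by (simp add: divide_simps) algebra
  show ?thesis
    unfolding c_def[symmetric] g_def[symmetric] B_def[symmetric] R_def[symmetric] a_eq b_eq
    using \<open>B > 0\<close> by (simp add: mult_le_0_iff)
qed

end
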